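(* Fix an integer $k\ge 1$. For $m\ge k$ let $w(m)$ be the maximal weight of a seed of span at most $m$ that solves the (linear) $(m,k)$-problem. Then $m-w(m)=\Theta\!\left(m^{\frac{k}{k+1}}\right)$ as $m\to\infty$.
   Context: A seed is a finite word over $\{\#,-\}$ ($-$ is called a joker); its span is its length and its weight its number of $\#$'s. A binary word is an $(m,k)$-similarity if it has length $m$ and exactly $k$ zeros. A seed $Q$ matches a binary word $w$ at position $j$ ($1\le j\le |w|-s(Q)+1$) if $w[j+t-1]=1$ for every $t$ with $Q[t]=\#$, and detects $w$ if it matches at some position. $Q$ solves the $(m,k)$-problem if it detects every $(m,k)$-similarity. *)

theory Defs
  imports Main "HOL-Library.Landau_Symbols"
begin

text \<open>A seed is a list over {#,-}: True encodes '#', False encodes the joker '-'.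
  A binary word is a list of bool: True encodes 1, False encodes 0.
  Positions are 0-indexed here (position j corresponds to the paper's j+1).\<close>

type_synonym seed = "bool list"
type_synonym bword = "bool list"

definition span :: "seed \<Rightarrow> nat" where
  "span Q = length Q"

definition weight :: "seed \<Rightarrow> nat" where
  "weight Q = length (filter id Q)"

definition is_similarity :: "nat \<Rightarrow> nat \<Rightarrow> bword \<Rightarrow> bool" where
  "is_similarity m k w \<longleftrightarrow> length w = m \<and> length (filter Not w) = k"

definition matches_at :: "seed \<Rightarrow> bword \<Rightarrow> nat \<Rightarrow> bool" where
  "matches_at Q w j \<longleftrightarrow> j + span Q \<le> length w \<and> (\<forall>t < span Q. Q ! t \<longrightarrow> w ! (j + t))"

definition detects :: "seed \<Rightarrow> bword \<Rightarrow> bool" where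
  "detects Q w \<longleftrightarrow> (\<exists>j. matches_at Q w j)"

definition solves :: "seed \<Rightarrow> nat \<Rightarrow> nat \<Rightarrow> bool" where
  "solves Q m k \<longleftrightarrow> (\<forall>w. is_similarity m k w \<longrightarrow> detects Q w)"

definition max_weight :: "nat \<Rightarrow> nat \<Rightarrow> nat" where
  "max_weight k m = Max {weight Q | Q. span Q \<le> m \<and> solves Q m k}"

end

theory Submission
  imports Defs "HOL-Library.Landau_Symbols"
begin

(*
  Let D(m) = m - w(m) be the gap between the length of a similarity and the
  best weight of a seed of span at most m solving the (m,k)-problem.

  Let Q solve the problem, s = span Q \<le> m, and let J be its number
  of jokers.  Every admissible shift j \<le> m - s covers the middle window
  [m-s, s), of size 2s - m.  A k-tuple of positions in that window which, for
  every shift, hits some '#' of the shifted seed would give an undetected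
  similarity; hence the k-tuples from the window are covered by the
  (m - s + 1) sets of tuples inside shifted joker sets, giving
  (2s - m)^k \<le> (m - s + 1) J^k.  A case split on s yields m^k \<le> 4^k D^(k+1).

  For a base a with a^k \<le> m, the seed whose position t is '#' iff
  the k lowest base-a digits of t are nonzero solves the problem: given zeros
  p_0 < ... < p_(k-1), a shift j < a^k can be chosen digit by digit so that
  digit i of p_i - j vanishes.  It has at most k (m/a + a^k) jokers; taking
  a \<approx> m^(1/(k+1)) gives D(m) = O(m^(k/(k+1))).
*)

definition jokers :: "seed \<Rightarrow> nat set" where
  "jokers Q = {t. t < length Q \<and> \<not> Q ! t}"

lemma weight_plus_jokers: "weight Q + card (jokers Q) = length Q"
proof -
  have "length (filter id Q) + length (filter (\<lambda>x. \<not> id x) Q) = length Q"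
    by (rule sum_length_filter_compl)
  thus ?thesis unfolding weight_def jokers_def by (simp add: length_filter_conv_card)
qed

lemma solving_weights_finite_nonempty:
  shows "finite {weight Q | Q. span Q \<le> m \<and> solves Q m k}"
    and "weight [] \<in> {weight Q | Q. span Q \<le> m \<and> solves Q m k}"
proof -
  have "{weight Q | Q. span Q \<le> m \<and> solves Q m k} \<subseteq> weight ` {xs. set xs \<subseteq> UNIV \<and> length xs \<le> m}"
    by (auto simp: span_def)
  moreover have "finite {xs. set xs \<subseteq> (UNIV::bool set) \<and> length xs \<le> m}"
    by (rule finite_lists_length_le) simp
  ultimately show "finite {weight Q | Q. span Q \<le> m \<and> solves Q m k}"
    using finite_subset by blast
  have "solves [] m k" by (auto simp: solves_def detects_def matches_at_def span_def)
  thus "weight [] \<in> {weight Q | Q. span Q \<le> m \<and> solves Q m k}" by (auto simp: span_def)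
qed

lemma max_weight_attained: "\<exists>Q. span Q \<le> m \<and> solves Q m k \<and> weight Q = max_weight k m"
proof -
  have "max_weight k m \<in> {weight Q | Q. span Q \<le> m \<and> solves Q m k}"
    unfolding max_weight_def using solving_weights_finite_nonempty[of m k] by (intro Max_in) blast+
  thus ?thesis by auto
qed

lemma max_weight_ge: "span Q \<le> m \<Longrightarrow> solves Q m k \<Longrightarrow> weight Q \<le> max_weight k m"
  unfolding max_weight_def using solving_weights_finite_nonempty(1) by (intro Max_ge) auto

lemma max_weight_le: "max_weight k m \<le> m"
proof -
  obtain Q where "span Q \<le> m" "weight Q = max_weight k m" using max_weight_attained by blast
  thus ?thesis unfolding weight_def span_def by (metis length_filter_le order.trans)
qed

section \<open>Lower bound on the gap\<close>

text \<open>A solving seed can dodge any set of at most k positions: some admissible shift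
  places only jokers on those points of the set that it covers.  (Extend the set
  to exactly k zeros and use that the resulting similarity is detected.)\<close>
lemma solving_seed_shift_avoids:
  assumes sol: "solves Q m k" and km: "k \<le> m"
    and Z0m: "Z0 \<subseteq> {..<m}" and cZ0: "card Z0 \<le> k"
  obtains j where "j + length Q \<le> m"
    and "\<And>p. p \<in> Z0 \<Longrightarrow> j \<le> p \<Longrightarrow> p < j + length Q \<Longrightarrow> \<not> Q ! (p - j)"
proof -
  have "k - card Z0 \<le> card ({..<m} - Z0)"
    using Z0m km by (simp add: card_Diff_subset finite_subset)
  then obtain T where T: "T \<subseteq> {..<m} - Z0" "card T = k - card Z0" "finite T"
    by (rule obtain_subset_with_card_n)
  define Z where "Z = Z0 \<union> T"
  have Zm: "Z \<subseteq> {..<m}" using Z0m T by (auto simp: Z_def)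
  have "card Z = card Z0 + card T"
    unfolding Z_def using T Z0m by (intro card_Un_disjoint) (auto intro: finite_subset)
  hence cZ: "card Z = k" using T(2) cZ0 by simp
  define w where "w = map (\<lambda>i. i \<notin> Z) [0..<m]"
  have "{i. i < m \<and> \<not> w ! i} = Z" using Zm by (auto simp: w_def)
  hence "is_similarity m k w" using cZ by (simp add: is_similarity_def w_def length_filter_conv_card)
  with sol obtain j where mj: "matches_at Q w j" unfolding solves_def detects_def by blast
  show ?thesis
  proof
    show "j + length Q \<le> m" using mj by (simp add: matches_at_def span_def w_def)
    fix p assume p: "p \<in> Z0" "j \<le> p" "p < j + length Q"
    show "\<not> Q ! (p - j)"
    proof
      assume "Q ! (p - j)"
      moreover have "p - j < length Q" using p by simp
      ultimately have "w ! (j + (p - j))" using mj by (simp add: matches_at_def span_def)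
      moreover have "p < m" using p(1) Z0m by auto
      ultimately show False using p by (simp add: w_def Z_def)
    qed
  qed
qed

text \<open>The counting inequality: k-tuples from the window [m-s, s) that every
  shift must hit, versus the (m-s+1) families of tuples inside shifted joker sets.\<close>
lemma solving_seed_window_bound:
  assumes sol: "solves Q m k" and sm: "length Q \<le> m" and km: "k \<le> m"
  shows "(2 * length Q - m) ^ k \<le> (m - length Q + 1) * card (jokers Q) ^ k"
proof -
  define s where "s = length Q"
  define A where "A = {m - s..<s}"
  define Tup where "Tup = {xs. set xs \<subseteq> A \<and> length xs = k}"
  define Bad where "Bad j = {xs. set xs \<subseteq> (\<lambda>t. t + j) ` jokers Q \<and> length xs = k}" for j
  have fin_jokers: "finite (jokers Q)" by (simp add: jokers_def)
  have card_Bad: "card (Bad j) = card (jokers Q) ^ k" for j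
    unfolding Bad_def using fin_jokers
    by (simp add: card_lists_length_eq card_image inj_on_def)
  have "Tup \<subseteq> (\<Union>j<m - s + 1. Bad j)"
  proof
    fix xs assume xs: "xs \<in> Tup"
    have "set xs \<subseteq> {..<m}" "card (set xs) \<le> k"
      using xs sm by (auto simp: Tup_def A_def s_def card_length)
    then obtain j where j: "j + s \<le> m"
      and avoid: "\<And>p. p \<in> set xs \<Longrightarrow> j \<le> p \<Longrightarrow> p < j + s \<Longrightarrow> \<not> Q ! (p - j)"
      using solving_seed_shift_avoids[OF sol km] unfolding s_def by metis
    have "set xs \<subseteq> (\<lambda>t. t + j) ` jokers Q"
    proof
      fix p assume p: "p \<in> set xs"
      moreover have "set xs \<subseteq> {m - s..<s}" using xs by (simp add: Tup_def A_def)
      ultimately have "m - s \<le> p" "p < s" by auto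
      hence "j \<le> p" "p < j + s" using j by auto
      hence "p - j \<in> jokers Q" "p = (p - j) + j" using avoid[OF p] by (auto simp: jokers_def s_def)
      thus "p \<in> (\<lambda>t. t + j) ` jokers Q" by blast
    qed
    thus "xs \<in> (\<Union>j<m - s + 1. Bad j)" using xs j by (auto simp: Bad_def Tup_def)
  qed
  hence "card Tup \<le> card (\<Union>j<m - s + 1. Bad j)"
    by (intro card_mono) (auto simp: Bad_def fin_jokers intro: finite_lists_length_eq)
  also have "\<dots> \<le> (\<Sum>j<m - s + 1. card (Bad j))" by (rule card_UN_le) simp
  also have "\<dots> = (m - s + 1) * card (jokers Q) ^ k" by (simp add: card_Bad)
  finally show ?thesis
    unfolding Tup_def using sm by (simp add: card_lists_length_eq A_def s_def mult_2)
qed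

text \<open>If the optimal seed has span at most 3m/4,
  the part m - s of the gap is already at least m/4; otherwise the window has
  size at least m/2 and the counting inequality applies.\<close>
lemma gap_lower_bound:
  assumes k: "k \<ge> 1" and km: "k \<le> m"
  shows "m ^ k \<le> 4 ^ k * (m - max_weight k m) ^ (k + 1)"
proof -
  obtain Q where Q: "span Q \<le> m" "solves Q m k" "weight Q = max_weight k m"
    using max_weight_attained by blast
  define s where "s = length Q"
  define J where "J = card (jokers Q)"
  define D where "D = m - max_weight k m"
  have sm: "s \<le> m" using Q(1) by (simp add: s_def span_def)
  have D: "D = (m - s) + J"
    using weight_plus_jokers[of Q] Q(3) sm by (simp add: D_def s_def J_def)
  have window: "(2 * s - m) ^ k \<le> (m - s + 1) * J ^ k"
    using solving_seed_window_bound[OF Q(2) _ km] sm by (simp add: s_def J_def)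
  show ?thesis
  proof (cases "m \<le> 4 * (m - s)")
    case True
    have "m ^ k \<le> (4 * D) ^ k" using True D by (intro power_mono) auto
    also have "\<dots> = 4 ^ k * D ^ k" by (simp add: power_mult_distrib)
    also have "\<dots> \<le> 4 ^ k * D ^ (k + 1)"
      using True D km k by (intro mult_left_mono power_increasing) auto
    finally show ?thesis by (simp add: D_def)
  next
    case False
    have half: "m \<le> 2 * (2 * s - m)" using False sm by simp
    have "J \<noteq> 0"
    proof
      assume "J = 0"
      hence "(2 * s - m) ^ k = 0" using window k by (simp add: zero_power)
      hence "2 * s - m = 0" by simp
      thus False using half False by simp
    qed
    hence "(m - s + 1) * J ^ k \<le> D * D ^ k" using D by (intro mult_le_mono power_mono) auto
    hence window': "(2 * s - m) ^ k \<le> D ^ (k + 1)" using window by simp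
    have "m ^ k \<le> (2 * (2 * s - m)) ^ k" using half by (rule power_mono) simp
    also have "\<dots> = 2 ^ k * (2 * s - m) ^ k" by (simp add: power_mult_distrib)
    also have "\<dots> \<le> 4 ^ k * D ^ (k + 1)"
      using window' by (intro mult_le_mono power_mono) auto
    finally show ?thesis by (simp add: D_def)
  qed
qed

lemma powr_le_of_power_le:
  fixes x y :: real
  assumes "0 \<le> x" "0 \<le> y" "x ^ k \<le> y ^ (k + 1)"
  shows "x powr (real k / real (k + 1)) \<le> y"
proof (cases "x = 0")
  case True
  thus ?thesis using assms(2) by simp
next
  case False
  hence "x > 0" using assms(1) by simp
  hence "y ^ (k + 1) > 0" using assms(3) by (meson order.strict_trans2 zero_less_power)
  hence "y > 0" using assms(2) by (metis le_less power_0_Suc Suc_eq_plus1 less_irrefl)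
  have "x powr (real k / real (k + 1)) = (x powr real k) powr (1 / real (k + 1))"
    by (simp add: powr_powr)
  also have "\<dots> = (x ^ k) powr (1 / real (k + 1))" using \<open>x > 0\<close> by (simp add: powr_realpow)
  also have "\<dots> \<le> (y ^ (k + 1)) powr (1 / real (k + 1))"
    using assms by (intro powr_mono2) auto
  also have "\<dots> = (y powr real (k + 1)) powr (1 / real (k + 1))"
    using \<open>y > 0\<close> by (simp add: powr_realpow del: of_nat_Suc)
  also have "\<dots> = y" using \<open>y > 0\<close> by (simp add: powr_powr del: of_nat_Suc)
  finally show ?thesis .
qed

section \<open>Upper bound on the gap: a digit-based seed\<close>

text \<open>Given targets p_0, ..., p_(N-1) there is a shift j < a^N such that, for each i,
  the base-a digit of index i of p_i - j is zero (written with the remainder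
  modulo a^(i+1) being below a^i).  The digits of j are chosen one at a time;
  fixing digit N does not disturb the lower residues.\<close>
lemma digit_choice:
  fixes a :: int and p :: "nat \<Rightarrow> int"
  assumes a: "a \<ge> 1"
  shows "\<exists>j. 0 \<le> j \<and> j < a^N \<and> (\<forall>i<N. (p i - j) mod a^(Suc i) < a^i)"
proof (induction N)
  case 0 show ?case by (intro exI[of _ 0]) simp
next
  case (Suc N)
  then obtain j where j: "0 \<le> j" "j < a^N" "\<forall>i<N. (p i - j) mod a^(Suc i) < a^i" by blast
  define x where "x = (p N - j) mod a^(Suc N)"
  define c where "c = x div a^N"
  have aN: "a^N > 0" using a by simp
  have x0: "0 \<le> x" "x < a^N * a" using a by (auto simp: x_def mult.commute)
  have c0: "0 \<le> c" using x0 aN by (simp add: c_def pos_imp_zdiv_nonneg_iff)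
  have "c < a" using x0 aN unfolding c_def
    by (smt (verit) mult.commute minus_mod_eq_div_mult mult_right_less_imp_less pos_mod_sign)
  define j' where "j' = j + c * a^N"
  have "j' < a^N + (a - 1) * a^N"
    unfolding j'_def using j(2) mult_right_mono[of c "a - 1" "a^N"] \<open>c < a\<close> aN by linarith
  also have "\<dots> = a^Suc N" by (simp add: algebra_simps)
  finally have j'_lt: "j' < a^Suc N" .
  have "\<forall>i<Suc N. (p i - j') mod a^(Suc i) < a^i"
  proof (intro allI impI)
    fix i assume i: "i < Suc N"
    show "(p i - j') mod a^(Suc i) < a^i"
    proof (cases "i < N")
      case True
      have "a^(Suc i) dvd a^N" using True by (intro le_imp_power_dvd) simp
      hence "a^(Suc i) dvd c * a^N" by simp
      hence "(p i - j') mod a^(Suc i) = (p i - j) mod a^(Suc i)"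
        by (simp add: j'_def diff_diff_eq[symmetric] mod_eq_dvd_iff)
      thus ?thesis using j(3) True by simp
    next
      case False
      hence iN: "i = N" using i by simp
      have "(p N - j') mod a^(Suc N) = (x - c * a^N) mod a^(Suc N)"
        by (simp add: j'_def x_def diff_diff_eq[symmetric] mod_diff_left_eq)
      also have "x - c * a^N = x mod a^N" by (simp add: c_def minus_div_mult_eq_mod)
      also have "(x mod a^N) mod a^(Suc N) = x mod a^N"
        using aN a by (intro mod_pos_pos_trivial)
          (auto intro: order.strict_trans2[OF pos_mod_bound[OF aN]] simp: mult_le_cancel_left1)
      also have "\<dots> < a^N" using aN by simp
      finally show ?thesis using iN by simp
    qed
  qed
  moreover have "0 \<le> j'" using j(1) c0 aN by (simp add: j'_def)
  ultimately show ?case using j'_lt by blast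
qed

text \<open>The seed of span s whose position t is '#' iff the k lowest base-a digits of t
  are all nonzero.\<close>
definition digit_seed :: "nat \<Rightarrow> nat \<Rightarrow> nat \<Rightarrow> seed" where
  "digit_seed a k s = map (\<lambda>t. \<forall>l<k. a^l \<le> t mod a^(Suc l)) [0..<s]"

lemma digit_seed_nth: "t < s \<Longrightarrow> digit_seed a k s ! t = (\<forall>l<k. a^l \<le> t mod a^(Suc l))"
  by (simp add: digit_seed_def)

lemma length_digit_seed [simp]: "length (digit_seed a k s) = s"
  by (simp add: digit_seed_def)

text \<open>With span m + 1 - a^k all shifts j < a^k are admissible, and the shift from
  digit_choice puts the i-th zero of any (m,k)-similarity onto a joker.\<close>
lemma digit_seed_solves:
  assumes a: "a \<ge> 1" and am: "a^k \<le> m"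
  shows "solves (digit_seed a k (m + 1 - a^k)) m k"
  unfolding solves_def
proof (intro allI impI)
  define s where "s = m + 1 - a^k"
  define Q where "Q = digit_seed a k s"
  fix w assume "is_similarity m k w"
  hence lw: "length w = m" and nz: "length (filter Not w) = k" by (auto simp: is_similarity_def)
  define Z where "Z = {i. i < m \<and> \<not> w ! i}"
  have "card Z = k" using nz lw by (simp add: length_filter_conv_card Z_def)
  define ps where "ps = sorted_list_of_set Z"
  have lps: "length ps = k" and sps: "set ps = Z"
    using \<open>card Z = k\<close> by (simp_all add: ps_def Z_def)
  obtain j :: int where j: "0 \<le> j" "j < int a ^ k"
    "\<forall>i<k. (int (ps ! i) - j) mod int a^(Suc i) < int a^i"
    using digit_choice[where a="int a" and p="\<lambda>i. int (ps ! i)" and N=k] a by auto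
  define jn where "jn = nat j"
  have jn_lt: "jn < a^k" using j by (simp add: jn_def nat_less_iff)
  have "matches_at Q w jn"
    unfolding matches_at_def span_def Q_def length_digit_seed lw
  proof (intro conjI allI impI)
    show "jn + s \<le> m" using jn_lt am by (simp add: s_def)
    fix t assume ts: "t < s" and hash: "digit_seed a k s ! t"
    show "w ! (jn + t)"
    proof (rule ccontr)
      assume "\<not> w ! (jn + t)"
      moreover have "jn + t < m" using jn_lt ts am by (simp add: s_def)
      ultimately have "jn + t \<in> set ps" using sps Z_def by auto
      then obtain i where i: "i < k" "ps ! i = jn + t" using lps by (metis in_set_conv_nth)
      have "int (ps ! i) - j = int t" using i j(1) by (simp add: jn_def)
      hence "int t mod int a^(Suc i) < int a^i" using j(3) i(1) by metis
      hence "t mod a^(Suc i) < a^i" by (metis of_nat_less_iff of_nat_mod of_nat_power)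
      moreover have "a^i \<le> t mod a^(Suc i)" using digit_seed_nth[OF ts] hash i(1) by blast
      ultimately show False by simp
    qed
  qed
  thus "detects (digit_seed a k (m + 1 - a^k)) w" unfolding detects_def Q_def s_def by blast
qed

lemma card_small_remainders:
  fixes M r s :: nat
  assumes "M > 0"
  shows "card {t. t < s \<and> t mod M < r} \<le> (s div M + 1) * r"
proof -
  have "card {t. t < s \<and> t mod M < r} \<le> card ({..s div M} \<times> {..<r})"
  proof (rule card_inj_on_le[where f="\<lambda>t. (t div M, t mod M)"])
    show "inj_on (\<lambda>t. (t div M, t mod M)) {t. t < s \<and> t mod M < r}"
      by (intro inj_onI) (metis div_mult_mod_eq prod.inject)
    show "(\<lambda>t. (t div M, t mod M)) ` {t. t < s \<and> t mod M < r} \<subseteq> {..s div M} \<times> {..<r}"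
      by (auto intro: div_le_mono)
  qed simp
  thus ?thesis by simp
qed

text \<open>A fraction 1/a of the positions has a vanishing digit of a given index, up to
  a boundary error a^k; hence the digit seed has few jokers.\<close>
lemma digit_seed_jokers:
  assumes a: "a \<ge> 1"
  shows "card (jokers (digit_seed a k s)) \<le> k * (s div a + a^k)"
proof -
  have jokers_eq: "jokers (digit_seed a k s) = (\<Union>l<k. {t. t < s \<and> t mod a^(Suc l) < a^l})"
    by (auto simp: jokers_def digit_seed_nth not_le simp del: power_Suc) (meson leD)
  have "card (jokers (digit_seed a k s)) \<le> (\<Sum>l<k. card {t. t < s \<and> t mod a^(Suc l) < a^l})"
    unfolding jokers_eq by (rule card_UN_le) simp
  also have "\<dots> \<le> (\<Sum>l<k. s div a + a^k)"
  proof (rule sum_mono)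
    fix l assume l: "l \<in> {..<k}"
    have "card {t. t < s \<and> t mod a^(Suc l) < a^l} \<le> (s div a^(Suc l)) * a^l + a^l"
      using card_small_remainders[of "a^Suc l" s "a^l"] a by simp
    also have "(s div a^(Suc l)) * a^l \<le> s div a"
      by (simp add: div_mult2_eq)
    also have "a^l \<le> a^k" using a l by (intro power_increasing) auto
    finally show "card {t. t < s \<and> t mod a^(Suc l) < a^l} \<le> s div a + a^k" by simp
  qed
  finally show ?thesis by simp
qed

lemma gap_upper_bound:
  assumes a: "a \<ge> 1" and am: "a^k \<le> m"
  shows "m - max_weight k m \<le> (k + 1) * (m div a + a^k)"
proof -
  define s where "s = m + 1 - a^k"
  define Q where "Q = digit_seed a k s"
  have "1 \<le> a^k" using a by simp
  hence sm: "s \<le> m" by (simp add: s_def)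
  have "weight Q \<le> max_weight k m"
    using max_weight_ge digit_seed_solves[OF a am] sm by (simp add: Q_def s_def span_def)
  moreover have "card (jokers Q) \<le> k * (m div a + a^k)"
    using digit_seed_jokers[OF a, of k s] sm div_le_mono[OF sm, of a] unfolding Q_def
    by (meson add_le_mono1 mult_le_mono2 order.trans)
  moreover have "weight Q + card (jokers Q) = s" using weight_plus_jokers[of Q] by (simp add: Q_def)
  ultimately show ?thesis using am \<open>1 \<le> a^k\<close> by (simp add: s_def algebra_simps)
qed

section \<open>The asymptotic order of the gap\<close>

lemma gap_lower_real:
  assumes k: "k \<ge> 1" and km: "k \<le> m"
  shows "(real m / 4) powr (real k / real (k + 1)) \<le> real m - real (max_weight k m)"
proof -
  define D where "D = m - max_weight k m"
  have "real (m ^ k) \<le> real (4 ^ k * D ^ (k + 1))"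
    using gap_lower_bound[OF k km] unfolding D_def by (simp only: of_nat_le_iff)
  hence "real m ^ k \<le> 4 ^ k * real D ^ (k + 1)" by simp
  hence "(real m / 4) ^ k \<le> real D ^ (k + 1)"
    by (simp add: power_divide pos_divide_le_eq mult.commute)
  hence "(real m / 4) powr (real k / real (k + 1)) \<le> real D"
    by (intro powr_le_of_power_le) auto
  thus ?thesis using max_weight_le[of k m] by (simp add: D_def of_nat_diff)
qed

text \<open>Choose the base a = \<lfloor>m^(1/(k+1))\<rfloor>, so that a^k \<le> m^(k/(k+1)) and m/a \<le> 2 m^(k/(k+1)).\<close>
lemma gap_upper_real:
  assumes m: "m \<ge> 1"
  shows "real m - real (max_weight k m) \<le> 3 * real (k + 1) * real m powr (real k / real (k + 1))"
proof -
  define e where "e = real k / real (k + 1)"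
  define x where "x = real m powr (1 / real (k + 1))"
  define a where "a = nat \<lfloor>x\<rfloor>"
  have x1: "1 \<le> x" unfolding x_def using m by (intro ge_one_powr_ge_zero) auto
  have ax: "real a \<le> x" using x1 by (simp add: a_def)
  have a1: "a \<ge> 1" using x1 by (simp add: a_def le_nat_iff)
  have x2a: "x \<le> 2 * real a" using x1 a1 by (simp add: a_def) linarith
  have "x ^ k = x powr real k" using x1 by (simp add: powr_realpow)
  also have "\<dots> = real m powr e" by (simp add: x_def powr_powr e_def)
  finally have ak: "real a ^ k \<le> real m powr e" using ax by (metis power_mono of_nat_0_le_iff)
  have "real m powr e \<le> real m powr 1" using m by (intro powr_mono) (auto simp: e_def)
  also have "\<dots> = real m" using m by simp
  finally have "a^k \<le> m" using ak by (metis of_nat_le_iff of_nat_power order.trans)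
  have "real m / x = real m powr e"
  proof -
    have "real m / x = real m powr 1 / real m powr (1 / real (k + 1))" using m by (simp add: x_def)
    also have "\<dots> = real m powr (1 - 1 / real (k + 1))" by (simp add: powr_diff)
    also have "1 - 1 / real (k + 1) = e" by (simp add: e_def field_simps)
    finally show ?thesis .
  qed
  have "real (m div a) \<le> real m / real a" by (rule of_nat_div_le_of_nat)
  also have "\<dots> \<le> real m / (x / 2)" using x2a x1 by (intro divide_left_mono) auto
  also have "\<dots> = 2 * (real m / x)" by simp
  also have "\<dots> = 2 * real m powr e" using \<open>real m / x = real m powr e\<close> by simp
  finally have "real (m div a) + real a ^ k \<le> 3 * real m powr e" using ak by linarith
  have "real (m - max_weight k m) \<le> real ((k + 1) * (m div a + a^k))"
    using gap_upper_bound[OF a1 \<open>a^k \<le> m\<close>] by (simp only: of_nat_le_iff)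
  hence "real m - real (max_weight k m) \<le> real (k + 1) * (real (m div a) + real a ^ k)"
    using max_weight_le[of k m] by (simp add: of_nat_diff distrib_right)
  also have "\<dots> \<le> real (k + 1) * (3 * real m powr e)"
    using \<open>real (m div a) + real a ^ k \<le> 3 * real m powr e\<close> by (intro mult_left_mono) auto
  finally show ?thesis unfolding e_def by (simp only: mult_ac)
qed

theorem mainTheorem8:
  fixes k :: nat
  assumes "k \<ge> 1"
  shows "(\<lambda>m. real m - real (max_weight k m)) \<in> \<Theta>(\<lambda>m. real m powr (real k / real (k + 1)))"
proof (rule bigthetaI')
  define e where "e = real k / real (k + 1)"
  show "0 < 1 / 4 powr e" by simp
  show "0 < 3 * real (k + 1)" by simp
  have "eventually (\<lambda>m. m \<ge> k) at_top" by (rule eventually_ge_at_top)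
  thus "\<forall>\<^sub>F m in at_top.
        1 / 4 powr e * norm (real m powr (real k / real (k + 1))) \<le> norm (real m - real (max_weight k m)) \<and>
        norm (real m - real (max_weight k m)) \<le> 3 * real (k + 1) * norm (real m powr (real k / real (k + 1)))"
  proof eventually_elim
    case (elim m)
    have "(real m / 4) powr e = 1 / 4 powr e * real m powr e" by (simp add: powr_divide)
    moreover have "0 \<le> real m - real (max_weight k m)" using max_weight_le[of k m] by simp
    ultimately show ?case
      using gap_lower_real[OF assms elim] gap_upper_real[of m k] elim assms unfolding e_def by simp
  qed
qed

end
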